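(* Let $n\ge1$, $H\in\mathbb{R}^{n\times n}$ symmetric positive semidefinite, $h\in\mathbb{R}^n$, $\lambda>0$, and let $(z^k,v^k,s^k)_{k\ge0}$ be the iterates of the predictor–corrector algorithm described in the context, started from a point $(z^0,v^0,s^0)\in\mathcal{N}(1/4)$. Then at every iteration $k$, \[ \Delta\mu_p\le\frac14\mu^k,\qquad \hat\mu^k\le\Big(1-\frac{\alpha^k}{2}\Big)^2\mu^k,\qquad \Delta\mu_c\le\Big(1-\frac{\alpha^k}{2}\Big)^2\frac{1}{16n}\mu^k . \]
   Context: Box-QP: $\min_{z}\frac12 z^\top Hz+z^\top h$ s.t. $-\mathbf{1}_n\le z\le\mathbf{1}_n$, objective scaled by $2\lambda$. Variables: $z\in\mathbb{R}^n$, $v=(\gamma,\theta)\in\mathbb{R}^{2n}$, $s=(\phi,\psi)\in\mathbb{R}^{2n}$. $\mathcal{F}^+=\{(z,v,s): 2\lambda Hz+2\lambda h+\gamma-\theta=0,\ z+\phi-\mathbf{1}_n=0,\ z-\psi+\mathbf{1}_n=0,\ (\gamma,\theta,\phi,\psi)>0\}$; for $\beta\in[0,1]$, $\mathcal{N}(\beta)=\{(z,v,s)\in\mathcal{F}^+:\|v\odot s-\mu\mathbf{1}_{2n}\|\le\beta\mu\}$, $\mu=\frac{v^\top s}{2n}$. With $\Omega=[I_n,-I_n]$, the Newton system at $(z,v,s)$ with parameters $\sigma,\mu$ is $(2\lambda H)\Delta z+\Omega\Delta v=0$, $\Omega^\top\Delta z+\Delta s=0$, $s\odot\Delta v+v\odot\Delta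 s=\sigma\mu\mathbf{1}_{2n}-v\odot s$. Algorithm, iteration $k$: set $\mu^k=\frac{(v^k)^\top s^k}{2n}$; let $(\Delta z_p,\Delta v_p,\Delta s_p)$ solve the Newton system at $(z^k,v^k,s^k)$ with $\sigma=0$, $\mu=\mu^k$; $\Delta\mu_p=\frac{\Delta v_p^\top\Delta s_p}{2n}$; $\alpha^k=\min\big(\frac12,\sqrt{\mu^k/(8\|\Delta v_p\odot\Delta s_p-\Delta\mu_p\mathbf{1}_{2n}\|)}\big)$ (square-root term read as $+\infty$ if the norm is $0$); $(\hat z^k,\hat v^k,\hat s^k)=(z^k,v^k,s^k)+\alpha^k(\Delta z_p,\Delta v_p,\Delta s_p)$; $\hat\mu^k=\frac{(\hat v^k)^\top\hat s^k}{2n}$; let $(\Delta z_c,\Delta v_c,\Delta s_c)$ solve the Newton system at $(\hat z^k,\hat v^k,\hat s^k)$ with $\sigma=1$, $\mu=\hat\mu^k$; $\Delta\mu_c=\frac{\Delta v_c^\top\Delta s_c}{2n}$; $(z^{k+1},v^{k+1},s^{k+1})=(\hat z^k,\hat v^k,\hat s^k)+(\Delta z_c,\Delta v_c,\Delta s_c)$. $\odot$ is the Hadamard product, $\|\cdot\|$ the Euclidean norm. *)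

theory Defs
  imports "HOL-Analysis.Analysis"
begin

text \<open>Vectors in R^n are real^'n; vectors in R^(2n) are real^('n::finite + 'n), where the
  component Inl i is the i-th entry of the first block (gamma resp. phi) and Inr i the
  i-th entry of the second block (theta resp. psi).\<close>

definition ones :: "real^'m" where
  "ones = (\<chi> j. 1)"

definition hadamard :: "real^'m \<Rightarrow> real^'m \<Rightarrow> real^'m" where
  "hadamard a b = (\<chi> j. a $ j * b $ j)"

definition Omega :: "real^('n::finite + 'n) \<Rightarrow> real^'n" where
  "Omega v = (\<chi> i. v $ Inl i - v $ Inr i)"

definition OmegaT :: "real^'n \<Rightarrow> real^('n::finite + 'n)" where
  "OmegaT z = (\<chi> j. case j of Inl i \<Rightarrow> z $ i | Inr i \<Rightarrow> - (z $ i))"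

definition dmu :: "real^('n::finite + 'n) \<Rightarrow> real^('n::finite + 'n) \<Rightarrow> real" where
  "dmu v s = (v \<bullet> s) / (2 * real CARD('n::finite))"

definition Fplus :: "real^'n::finite^'n \<Rightarrow> real^'n \<Rightarrow> real \<Rightarrow>
    ((real^'n) \<times> (real^('n::finite + 'n)) \<times> (real^('n + 'n))) set" where
  "Fplus H h lam = {(z, v, s).
      (2 * lam) *\<^sub>R (H *v z) + (2 * lam) *\<^sub>R h + Omega v = 0 \<and>
      (\<forall>i. z $ i + s $ Inl i - 1 = 0) \<and>
      (\<forall>i. z $ i - s $ Inr i + 1 = 0) \<and>
      (\<forall>j. v $ j > 0) \<and> (\<forall>j. s $ j > 0)}"

definition Nbhd :: "real^'n::finite^'n \<Rightarrow> real^'n \<Rightarrow> real \<Rightarrow> real \<Rightarrow>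
    ((real^'n) \<times> (real^('n::finite + 'n)) \<times> (real^('n + 'n))) set" where
  "Nbhd H h lam beta = {(z, v, s). (z, v, s) \<in> Fplus H h lam \<and>
      norm (hadamard v s - dmu v s *\<^sub>R ones) \<le> beta * dmu v s}"

definition newton_sol :: "real^'n::finite^'n \<Rightarrow> real \<Rightarrow>
    real^'n \<Rightarrow> real^('n::finite + 'n) \<Rightarrow> real^('n::finite + 'n) \<Rightarrow> real \<Rightarrow> real \<Rightarrow>
    real^'n \<Rightarrow> real^('n::finite + 'n) \<Rightarrow> real^('n::finite + 'n) \<Rightarrow> bool" where
  "newton_sol H lam z v s sig mu dz dv ds \<longleftrightarrow>
     (2 * lam) *\<^sub>R (H *v dz) + Omega dv = 0 \<and>
     OmegaT dz + ds = 0 \<and>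
     hadamard s dv + hadamard v ds = (sig * mu) *\<^sub>R ones - hadamard v s"

text \<open>step length alpha^k (square-root term is +infinity when the norm is 0)\<close>
definition step_alpha :: "real \<Rightarrow> real^('n::finite + 'n) \<Rightarrow> real^('n::finite + 'n) \<Rightarrow> real" where
  "step_alpha mu dvp dsp =
     (let d = norm (hadamard dvp dsp - dmu dvp dsp *\<^sub>R ones)
      in if d = 0 then 1/2 else min (1/2) (sqrt (mu / (8 * d))))"

end

theory Submission
  imports Defs
begin

text \<open>
  Along a Newton direction (a, b) the complementarity products
  x(t) = (v + t a) \<odot> (s + t b) equal (1 - t) x + t \<sigma> \<mu> 1 + t^2 (a \<odot> b), so the
  centring error shrinks linearly up to the second-order term a \<odot> b.
  Positive semidefiniteness of H gives a \<bullet> b \<ge> 0, and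
  componentwise AM-GM gives 4 x_j (a \<odot> b)_j \<le> (\<sigma> \<mu> - x_j)^2, which bounds a \<odot> b by the
  centring error.  For the predictor (\<sigma> = 0) this yields a \<bullet> b \<le> v \<bullet> s / 4, and the step
  length is chosen so that the iterate lands in N(1/2).  For the corrector (\<sigma> = 1) from
  N(1/2) it yields \<parallel>a \<odot> b\<parallel>_1 \<le> \<mu>/4 and a \<bullet> b \<le> \<mu>/8, which brings the iterate back into
  N(1/4).  In both steps positivity of v and s survives because all products stay
  positive along the segment, so by induction every iterate lies in N(1/4).
\<close>

definition avg :: "real^'m::finite \<Rightarrow> real" where
  "avg x = (\<Sum>j\<in>UNIV. x $ j) / real CARD('m)"

abbreviation deviation :: "real^'m::finite \<Rightarrow> real^'m" where
  "deviation x \<equiv> x - avg x *\<^sub>R ones"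

definition centred :: "real \<Rightarrow> real^'m::finite \<Rightarrow> bool" where
  "centred \<beta> x \<longleftrightarrow> norm (deviation x) \<le> \<beta> * avg x"

text \<open>The neighbourhood N(\<beta>) without the feasibility equations, which the estimates never use.\<close>

definition central_nbhd :: "real \<Rightarrow> real^'m::finite \<Rightarrow> real^'m \<Rightarrow> bool" where
  "central_nbhd \<beta> v s \<longleftrightarrow>
     (\<forall>j. 0 < v $ j) \<and> (\<forall>j. 0 < s $ j) \<and> centred \<beta> (hadamard v s)"

lemma avg_add [simp]: "avg (x + y) = avg x + avg y"
  by (simp add: avg_def sum.distrib add_divide_distrib)

lemma avg_diff [simp]: "avg (x - y) = avg x - avg y"
  by (simp add: avg_def sum_subtractf diff_divide_distrib)

lemma avg_scaleR [simp]: "avg (c *\<^sub>R x) = c * avg x"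
  by (simp add: avg_def sum_distrib_left)

lemma avg_ones [simp]: "avg (ones :: real^'m::finite) = 1"
  by (simp add: avg_def ones_def)

lemma avg_mono: "(\<And>j. x $ j \<le> y $ j) \<Longrightarrow> avg x \<le> avg y"
  by (simp add: avg_def divide_right_mono sum_mono)

lemma avg_hadamard:
  fixes a b :: "real^'m::finite"
  shows "avg (hadamard a b) = (a \<bullet> b) / real CARD('m)"
  by (simp add: avg_def hadamard_def inner_vec_def)

lemma dmu_eq_avg:
  fixes v s :: "real^('n::finite + 'n)"
  shows "dmu v s = avg (hadamard v s)"
  by (simp add: dmu_def avg_hadamard card_sum)

lemma inner_ones:
  fixes x :: "real^'m::finite"
  shows "x \<bullet> ones = real CARD('m) * avg x"
  by (simp add: avg_def inner_vec_def ones_def)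

lemma power2_norm_eq_sum: "(norm x)\<^sup>2 = (\<Sum>j\<in>UNIV. (x $ j)\<^sup>2)"
  unfolding power2_norm_eq_inner inner_vec_def by (simp add: power2_eq_square)

lemma norm_deviation_le:
  fixes x :: "real^'m::finite"
  shows "norm (deviation x) \<le> norm x"
proof -
  have "orthogonal (deviation x) (avg x *\<^sub>R ones)"
    by (simp add: orthogonal_def inner_diff_left inner_ones power2_eq_square)
  from norm_add_Pythagorean[OF this]
  have "(norm x)\<^sup>2 = (norm (deviation x))\<^sup>2 + (norm (avg x *\<^sub>R (ones :: real^'m)))\<^sup>2"
    by simp
  then have "(norm (deviation x))\<^sup>2 \<le> (norm x)\<^sup>2"
    using zero_le_power2[of "norm (avg x *\<^sub>R (ones :: real^'m))"] by linarith
  then show ?thesis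
    using power2_le_imp_le norm_ge_zero by blast
qed

lemma centred_component_ge:
  assumes "centred \<beta> x"
  shows "(1 - \<beta>) * avg x \<le> x $ j"
proof -
  have "\<bar>x $ j - avg x\<bar> \<le> norm (deviation x)"
    using component_le_norm_cart[of "deviation x" j] by (simp add: ones_def)
  with assms show ?thesis
    unfolding centred_def by (simp add: algebra_simps)
qed

lemma central_nbhd_avg_pos:
  assumes "central_nbhd \<beta> v s"
  shows "0 < avg (hadamard v s)"
proof -
  have "0 < (\<Sum>j\<in>UNIV. hadamard v s $ j)"
    using assms by (intro sum_pos) (auto simp: central_nbhd_def hadamard_def)
  then show ?thesis
    by (simp add: avg_def)
qed

lemma pos_of_mult_pos_on_segment:
  fixes x y dx dy \<alpha> :: real
  assumes "0 < x" "0 \<le> \<alpha>"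
    and "\<And>t. 0 \<le> t \<Longrightarrow> t \<le> \<alpha> \<Longrightarrow> 0 < (x + t * dx) * (y + t * dy)"
  shows "0 < x + \<alpha> * dx"
proof (rule ccontr)
  assume "\<not> 0 < x + \<alpha> * dx"
  then have "\<alpha> * dx \<le> - x"
    by simp
  then have "dx < 0"
    using assms(1,2) by (smt (verit) mult_nonneg_nonneg)
  with \<open>\<alpha> * dx \<le> - x\<close> have "- \<alpha> \<le> x / dx"
    by (simp add: le_divide_eq)
  then have root_le: "- x / dx \<le> \<alpha>"
    by simp
  have "0 < (x + (- x / dx) * dx) * (y + (- x / dx) * dy)"
    using assms(1) \<open>dx < 0\<close> by (intro assms(3) root_le) (simp add: divide_nonneg_neg)
  with \<open>dx < 0\<close> show False
    by simp
qed

lemma central_nbhd_endpoint: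
  fixes v s a b :: "real^'m::finite"
  assumes "\<forall>j. 0 < v $ j" "\<forall>j. 0 < s $ j" "0 \<le> \<alpha>" "\<gamma> < 1"
    and segment: "\<And>t. 0 \<le> t \<Longrightarrow> t \<le> \<alpha> \<Longrightarrow>
      0 < avg (hadamard (v + t *\<^sub>R a) (s + t *\<^sub>R b)) \<and>
      centred \<gamma> (hadamard (v + t *\<^sub>R a) (s + t *\<^sub>R b))"
    and "centred \<beta> (hadamard (v + \<alpha> *\<^sub>R a) (s + \<alpha> *\<^sub>R b))"
  shows "central_nbhd \<beta> (v + \<alpha> *\<^sub>R a) (s + \<alpha> *\<^sub>R b)"
proof -
  have prod_pos: "0 < (v $ j + t * a $ j) * (s $ j + t * b $ j)" if "0 \<le> t" "t \<le> \<alpha>" for t j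
  proof -
    have "0 < (1 - \<gamma>) * avg (hadamard (v + t *\<^sub>R a) (s + t *\<^sub>R b))"
      using segment[OF that] \<open>\<gamma> < 1\<close> by simp
    also have "\<dots> \<le> hadamard (v + t *\<^sub>R a) (s + t *\<^sub>R b) $ j"
      using segment[OF that] by (blast intro: centred_component_ge)
    finally show ?thesis
      by (simp add: hadamard_def)
  qed
  have "0 < v $ j + \<alpha> * a $ j" for j
    by (rule pos_of_mult_pos_on_segment[where y = "s $ j" and dy = "b $ j"])
      (use assms(1,3) prod_pos in auto)
  moreover have "0 < s $ j + \<alpha> * b $ j" for j
    by (rule pos_of_mult_pos_on_segment[where y = "v $ j" and dy = "a $ j"])
      (use assms(2,3) prod_pos in \<open>auto simp: mult.commute\<close>)
  ultimately show ?thesis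
    using assms(6) by (simp add: central_nbhd_def)
qed

lemma hadamard_add_scaleR:
  "hadamard (v + t *\<^sub>R a) (s + t *\<^sub>R b) =
     hadamard v s + t *\<^sub>R (hadamard s a + hadamard v b) + t\<^sup>2 *\<^sub>R hadamard a b"
  by (simp add: vec_eq_iff hadamard_def algebra_simps power2_eq_square)

context
  fixes v s a b :: "real^'m::finite" and \<sigma> :: real
  assumes newton: "hadamard s a + hadamard v b = (\<sigma> * avg (hadamard v s)) *\<^sub>R ones - hadamard v s"
begin

lemma avg_newton_line:
  "avg (hadamard (v + t *\<^sub>R a) (s + t *\<^sub>R b)) =
     (1 - t + t * \<sigma>) * avg (hadamard v s) + t\<^sup>2 * avg (hadamard a b)"
  by (simp add: hadamard_add_scaleR newton algebra_simps)

lemma deviation_newton_line: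
  "deviation (hadamard (v + t *\<^sub>R a) (s + t *\<^sub>R b)) =
     (1 - t) *\<^sub>R deviation (hadamard v s) + t\<^sup>2 *\<^sub>R deviation (hadamard a b)"
  unfolding avg_newton_line by (simp add: hadamard_add_scaleR newton algebra_simps)

lemma norm_deviation_newton_line:
  assumes "t \<le> 1"
  shows "norm (deviation (hadamard (v + t *\<^sub>R a) (s + t *\<^sub>R b))) \<le>
    (1 - t) * norm (deviation (hadamard v s)) + t\<^sup>2 * norm (deviation (hadamard a b))"
  unfolding deviation_newton_line
  using norm_triangle_ineq[of "(1 - t) *\<^sub>R deviation (hadamard v s)"
      "t\<^sup>2 *\<^sub>R deviation (hadamard a b)"] assms
  by simp

lemma newton_product_le:
  "4 * hadamard v s $ j * hadamard a b $ j \<le> (\<sigma> * avg (hadamard v s) - hadamard v s $ j)\<^sup>2"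
proof -
  have "s $ j * a $ j + v $ j * b $ j = \<sigma> * avg (hadamard v s) - hadamard v s $ j"
    using arg_cong[OF newton, of "\<lambda>x. x $ j"] by (simp add: hadamard_def ones_def)
  moreover have "(s $ j * a $ j + v $ j * b $ j)\<^sup>2 - 4 * (v $ j * s $ j) * (a $ j * b $ j) =
      (s $ j * a $ j - v $ j * b $ j)\<^sup>2"
    by (simp add: power2_eq_square algebra_simps)
  ultimately show ?thesis
    by (simp add: hadamard_def) (smt (verit) zero_le_power2)
qed

end

lemma predictor_step:
  fixes v s a b :: "real^'m::finite"
  defines "\<mu> \<equiv> avg (hadamard v s)"
  assumes nbhd: "central_nbhd (1/4) v s"
    and newton: "hadamard s a + hadamard v b = - hadamard v s"
    and nonneg: "0 \<le> avg (hadamard a b)"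
    and step: "0 \<le> \<alpha>" "\<alpha> \<le> 1/2" "\<alpha>\<^sup>2 * norm (deviation (hadamard a b)) \<le> \<mu> / 8"
  shows "avg (hadamard a b) \<le> \<mu> / 4"
    and "avg (hadamard (v + \<alpha> *\<^sub>R a) (s + \<alpha> *\<^sub>R b)) \<le> (1 - \<alpha>/2)\<^sup>2 * \<mu>"
    and "central_nbhd (1/2) (v + \<alpha> *\<^sub>R a) (s + \<alpha> *\<^sub>R b)"
proof -
  have newton0: "hadamard s a + hadamard v b = (0 * \<mu>) *\<^sub>R ones - hadamard v s"
    using newton by simp
  note line = avg_newton_line[OF newton0[unfolded \<mu>_def]]
    norm_deviation_newton_line[OF newton0[unfolded \<mu>_def]]
  have \<mu>_pos: "0 < \<mu>"
    using central_nbhd_avg_pos[OF nbhd] by (simp add: \<mu>_def)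
  have dev_le: "norm (deviation (hadamard v s)) \<le> \<mu> / 4"
    using nbhd by (simp add: central_nbhd_def centred_def \<mu>_def)
  have "hadamard a b $ j \<le> hadamard v s $ j / 4" for j
  proof -
    have "0 < hadamard v s $ j"
      using nbhd by (simp add: central_nbhd_def hadamard_def)
    moreover have "4 * hadamard v s $ j * hadamard a b $ j \<le> (hadamard v s $ j)\<^sup>2"
      using newton_product_le[OF newton0[unfolded \<mu>_def], of j] by simp
    ultimately show ?thesis
      by (simp add: power2_eq_square)
  qed
  then have "avg (hadamard a b) \<le> avg ((1/4) *\<^sub>R hadamard v s)"
    by (intro avg_mono) simp
  then show avg_le: "avg (hadamard a b) \<le> \<mu> / 4"
    by (simp add: \<mu>_def)
  have "avg (hadamard (v + \<alpha> *\<^sub>R a) (s + \<alpha> *\<^sub>R b)) \<le> (1 - \<alpha>) * \<mu> + \<alpha>\<^sup>2 * (\<mu> / 4)"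
    using line(1)[of \<alpha>] mult_left_mono[OF avg_le, of "\<alpha>\<^sup>2"] by (simp add: \<mu>_def)
  also have "\<dots> = (1 - \<alpha>/2)\<^sup>2 * \<mu>"
    by (simp add: power2_eq_square algebra_simps)
  finally show "avg (hadamard (v + \<alpha> *\<^sub>R a) (s + \<alpha> *\<^sub>R b)) \<le> (1 - \<alpha>/2)\<^sup>2 * \<mu>" .
  have segment: "0 < avg (hadamard (v + t *\<^sub>R a) (s + t *\<^sub>R b)) \<and>
      centred (1/2) (hadamard (v + t *\<^sub>R a) (s + t *\<^sub>R b))" if "0 \<le> t" "t \<le> \<alpha>" for t
  proof -
    have avg_ge: "(1 - t) * \<mu> \<le> avg (hadamard (v + t *\<^sub>R a) (s + t *\<^sub>R b))"
      using line(1)[of t] nonneg by (simp add: \<mu>_def)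
    have half: "1/2 * \<mu> \<le> (1 - t) * \<mu>"
      using that step \<mu>_pos by (intro mult_right_mono) auto
    have "t\<^sup>2 * norm (deviation (hadamard a b)) \<le> \<alpha>\<^sup>2 * norm (deviation (hadamard a b))"
      using that by (intro mult_right_mono power_mono) auto
    moreover have "(1 - t) * norm (deviation (hadamard v s)) \<le> (1 - t) * \<mu> / 4"
      using mult_left_mono[OF dev_le, of "1 - t"] that step by simp
    ultimately have "norm (deviation (hadamard (v + t *\<^sub>R a) (s + t *\<^sub>R b))) \<le>
        (1 - t) * \<mu> / 4 + \<mu> / 8"
      using line(2)[of t] that step by linarith
    then show ?thesis
      unfolding centred_def using avg_ge half \<mu>_pos by linarith
  qed
  show "central_nbhd (1/2) (v + \<alpha> *\<^sub>R a) (s + \<alpha> *\<^sub>R b)"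
    using nbhd step(1) segment[OF step(1) order_refl]
    by (intro central_nbhd_endpoint[where \<gamma> = "1/2"] segment) (auto simp: central_nbhd_def)
qed

lemma corrector_step:
  fixes v s a b :: "real^'m::finite"
  defines "\<mu> \<equiv> avg (hadamard v s)"
  assumes nbhd: "central_nbhd (1/2) v s"
    and newton: "hadamard s a + hadamard v b = \<mu> *\<^sub>R ones - hadamard v s"
    and nonneg: "0 \<le> avg (hadamard a b)"
  shows "avg (hadamard a b) \<le> \<mu> / (8 * real CARD('m))"
    and "central_nbhd (1/4) (v + a) (s + b)"
proof -
  have newton1: "hadamard s a + hadamard v b = (1 * avg (hadamard v s)) *\<^sub>R ones - hadamard v s"
    using newton by (simp add: \<mu>_def)
  note line = avg_newton_line[OF newton1] norm_deviation_newton_line[OF newton1]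
  define p where "p = hadamard a b"
  have \<mu>_pos: "0 < \<mu>"
    using central_nbhd_avg_pos[OF nbhd] by (simp add: \<mu>_def)
  have dev_le: "norm (deviation (hadamard v s)) \<le> \<mu> / 2"
    using nbhd by (simp add: central_nbhd_def centred_def \<mu>_def)
  have "\<mu> * (\<bar>p $ j\<bar> + p $ j) \<le> (\<mu> - hadamard v s $ j)\<^sup>2" for j
  proof (cases "0 \<le> p $ j")
    case True
    have "(1 - 1/2) * \<mu> \<le> hadamard v s $ j"
      using nbhd centred_component_ge by (fastforce simp: central_nbhd_def \<mu>_def)
    then have "2 * \<mu> * p $ j \<le> 4 * hadamard v s $ j * p $ j"
      using True by (intro mult_right_mono) auto
    moreover have "4 * hadamard v s $ j * p $ j \<le> (\<mu> - hadamard v s $ j)\<^sup>2"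
      using newton_product_le[OF newton1, of j] by (simp add: p_def \<mu>_def)
    moreover have "\<mu> * (\<bar>p $ j\<bar> + p $ j) = 2 * \<mu> * p $ j"
      using True by simp
    ultimately show ?thesis
      by linarith
  qed simp
  then have "\<mu> * (\<Sum>j\<in>UNIV. \<bar>p $ j\<bar> + p $ j) \<le> (\<Sum>j\<in>UNIV. (hadamard v s $ j - \<mu>)\<^sup>2)"
    unfolding sum_distrib_left by (intro sum_mono) (simp add: power2_commute)
  also have "\<dots> = (norm (deviation (hadamard v s)))\<^sup>2"
    by (simp add: power2_norm_eq_sum ones_def \<mu>_def)
  also have "\<dots> \<le> \<mu> * (\<mu> / 4)"
    using power_mono[OF dev_le, of 2] by (simp add: power2_eq_square)
  finally have l1_bound: "(\<Sum>j\<in>UNIV. \<bar>p $ j\<bar>) + (\<Sum>j\<in>UNIV. p $ j) \<le> \<mu> / 4"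
    using \<mu>_pos by (simp add: sum.distrib)
  have sum_nonneg: "0 \<le> (\<Sum>j\<in>UNIV. p $ j)"
    using nonneg by (simp add: p_def avg_def zero_le_divide_iff)
  have "(\<Sum>j\<in>UNIV. p $ j) \<le> (\<Sum>j\<in>UNIV. \<bar>p $ j\<bar>)"
    by (intro sum_mono) simp
  then have "(\<Sum>j\<in>UNIV. p $ j) \<le> \<mu> / 8"
    using l1_bound by linarith
  then show "avg (hadamard a b) \<le> \<mu> / (8 * real CARD('m))"
    by (simp add: p_def avg_def divide_right_mono flip: divide_divide_eq_left)
  have "norm (deviation p) \<le> \<mu> / 4"
    using norm_deviation_le[of p] norm_le_l1_cart[of p] l1_bound sum_nonneg by linarith
  then have dev_line: "norm (deviation (hadamard (v + t *\<^sub>R a) (s + t *\<^sub>R b))) \<le>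
      \<mu> / 2 - t * \<mu> / 2 + t\<^sup>2 * \<mu> / 4" if "0 \<le> t" "t \<le> 1" for t
    using line(2)[OF that(2)] mult_left_mono[OF dev_le, of "1 - t"]
      mult_left_mono[of "norm (deviation p)" "\<mu> / 4" "t\<^sup>2"] that
    by (simp add: p_def algebra_simps)
  have avg_line: "\<mu> \<le> avg (hadamard (v + t *\<^sub>R a) (s + t *\<^sub>R b))" for t
    using line(1)[of t] nonneg by (simp add: \<mu>_def)
  have segment: "0 < avg (hadamard (v + t *\<^sub>R a) (s + t *\<^sub>R b)) \<and>
      centred (1/2) (hadamard (v + t *\<^sub>R a) (s + t *\<^sub>R b))" if "0 \<le> t" "t \<le> 1" for t
  proof -
    have "t\<^sup>2 * \<mu> \<le> t * \<mu>"
      using that \<mu>_pos by (intro mult_right_mono) (auto simp: power2_eq_square mult_left_le)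
    moreover have "0 \<le> t * \<mu>"
      using that \<mu>_pos by simp
    ultimately show ?thesis
      unfolding centred_def using dev_line[OF that] avg_line[of t] \<mu>_pos by linarith
  qed
  have "centred (1/4) (hadamard (v + 1 *\<^sub>R a) (s + 1 *\<^sub>R b))"
    unfolding centred_def using dev_line[of 1] avg_line[of 1] by simp
  then have "central_nbhd (1/4) (v + 1 *\<^sub>R a) (s + 1 *\<^sub>R b)"
    using nbhd segment by (intro central_nbhd_endpoint[where \<gamma> = "1/2"]) (auto simp: central_nbhd_def)
  then show "central_nbhd (1/4) (v + a) (s + b)"
    by simp
qed

lemma inner_OmegaT:
  fixes u :: "real^('n::finite + 'n)"
  shows "u \<bullet> OmegaT z = Omega u \<bullet> z"
proof -
  have "u \<bullet> OmegaT z = (\<Sum>i\<in>UNIV. u $ Inl i * z $ i) + (\<Sum>i\<in>UNIV. u $ Inr i * - z $ i)"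
    by (simp add: inner_vec_def OmegaT_def sum.Plus flip: UNIV_Plus_UNIV)
  also have "\<dots> = Omega u \<bullet> z"
    by (simp add: inner_vec_def Omega_def left_diff_distrib sum_subtractf sum_negf)
  finally show ?thesis .
qed

lemma newton_sol_inner_nonneg:
  assumes psd: "\<forall>x. 0 \<le> x \<bullet> (H *v x)" and "0 \<le> lam"
    and "newton_sol H lam z v s \<sigma> \<mu> dz dv ds"
  shows "0 \<le> dv \<bullet> ds"
proof -
  have "Omega dv = - ((2 * lam) *\<^sub>R (H *v dz))" and "ds = - OmegaT dz"
    using assms(3) unfolding newton_sol_def by (simp_all add: eq_neg_iff_add_eq_0 add.commute)
  then have "dv \<bullet> ds = 2 * lam * (dz \<bullet> (H *v dz))"
    by (simp add: inner_OmegaT inner_commute)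
  then show ?thesis
    using psd \<open>0 \<le> lam\<close> by simp
qed

lemma step_alpha_bounds:
  assumes "0 < \<mu>"
  shows "0 \<le> step_alpha \<mu> a b" "step_alpha \<mu> a b \<le> 1/2"
    and "(step_alpha \<mu> a b)\<^sup>2 * norm (deviation (hadamard a b)) \<le> \<mu> / 8"
proof -
  define d where "d = norm (deviation (hadamard a b))"
  have "0 \<le> d"
    by (simp add: d_def)
  have alpha: "step_alpha \<mu> a b = (if d = 0 then 1/2 else min (1/2) (sqrt (\<mu> / (8 * d))))"
    by (simp add: step_alpha_def d_def dmu_eq_avg)
  show nonneg: "0 \<le> step_alpha \<mu> a b" and "step_alpha \<mu> a b \<le> 1/2"
    using assms \<open>0 \<le> d\<close> by (auto simp: alpha)
  show "(step_alpha \<mu> a b)\<^sup>2 * norm (deviation (hadamard a b)) \<le> \<mu> / 8"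
  proof (cases "d = 0")
    case False
    then have "0 < d"
      by (simp add: d_def)
    have "(step_alpha \<mu> a b)\<^sup>2 \<le> (sqrt (\<mu> / (8 * d)))\<^sup>2"
      using False nonneg by (intro power_mono) (auto simp: alpha)
    also have "\<dots> = \<mu> / (8 * d)"
      using assms \<open>0 < d\<close> by simp
    finally show ?thesis
      using \<open>0 < d\<close> by (simp add: d_def[symmetric] pos_le_divide_eq)
  qed (use assms in \<open>simp add: d_def\<close>)
qed

lemma predictor_corrector_step:
  fixes H :: "real^'n^'n" and v s dvp dsp dvc dsc :: "real^('n::finite + 'n)"
  defines "\<mu> \<equiv> dmu v s"
  defines "\<alpha> \<equiv> step_alpha \<mu> dvp dsp"
  defines "vh \<equiv> v + \<alpha> *\<^sub>R dvp" and "sh \<equiv> s + \<alpha> *\<^sub>R dsp"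
  assumes psd: "\<forall>x. 0 \<le> x \<bullet> (H *v x)" and lam: "0 \<le> lam"
    and nbhd: "central_nbhd (1/4) v s"
    and pred: "newton_sol H lam z v s 0 \<mu> dzp dvp dsp"
    and corr: "newton_sol H lam zh vh sh 1 (dmu vh sh) dzc dvc dsc"
  shows "dmu dvp dsp \<le> 1/4 * \<mu>"
    and "dmu vh sh \<le> (1 - \<alpha>/2)\<^sup>2 * \<mu>"
    and "dmu dvc dsc \<le> (1 - \<alpha>/2)\<^sup>2 * (1 / (16 * real CARD('n))) * \<mu>"
    and "central_nbhd (1/4) (vh + dvc) (sh + dsc)"
proof -
  have \<mu>: "\<mu> = avg (hadamard v s)"
    by (simp add: \<mu>_def dmu_eq_avg)
  have "0 < \<mu>"
    unfolding \<mu> by (rule central_nbhd_avg_pos[OF nbhd])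
  note step = step_alpha_bounds[OF this, of dvp dsp, folded \<alpha>_def, unfolded \<mu>]
  have newton_pred: "hadamard s dvp + hadamard v dsp = - hadamard v s"
    using pred by (simp add: newton_sol_def)
  have nonneg_pred: "0 \<le> avg (hadamard dvp dsp)"
    using newton_sol_inner_nonneg[OF psd lam pred] by (simp add: avg_hadamard)
  note predictor = predictor_step[OF nbhd newton_pred nonneg_pred step, folded \<mu> vh_def sh_def]
  have newton_corr: "hadamard sh dvc + hadamard vh dsc = avg (hadamard vh sh) *\<^sub>R ones - hadamard vh sh"
    using corr by (simp add: newton_sol_def dmu_eq_avg)
  have nonneg_corr: "0 \<le> avg (hadamard dvc dsc)"
    using newton_sol_inner_nonneg[OF psd lam corr] by (simp add: avg_hadamard)
  note corrector = corrector_step[OF predictor(3) newton_corr nonneg_corr]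
  show "dmu dvp dsp \<le> 1/4 * \<mu>" "dmu vh sh \<le> (1 - \<alpha>/2)\<^sup>2 * \<mu>"
    using predictor(1,2) by (simp_all add: dmu_eq_avg)
  have "dmu dvc dsc \<le> dmu vh sh / (16 * real CARD('n))"
    using corrector(1) by (simp add: dmu_eq_avg card_sum mult.assoc)
  also have "\<dots> \<le> (1 - \<alpha>/2)\<^sup>2 * \<mu> / (16 * real CARD('n))"
    using predictor(2) by (simp add: dmu_eq_avg divide_right_mono)
  finally show "dmu dvc dsc \<le> (1 - \<alpha>/2)\<^sup>2 * (1 / (16 * real CARD('n))) * \<mu>"
    by simp
  show "central_nbhd (1/4) (vh + dvc) (sh + dsc)"
    by (rule corrector(2))
qed

theorem lemma4:
  fixes H :: "real^'n^'n" and h :: "real^'n" and lam :: real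
    and z :: "nat \<Rightarrow> real^'n" and v s :: "nat \<Rightarrow> real^('n + 'n)"
    and dzp dzc :: "nat \<Rightarrow> real^'n" and dvp dsp dvc dsc :: "nat \<Rightarrow> real^('n + 'n)"
  assumes symH: "transpose H = H"
    and psdH: "\<forall>x. x \<bullet> (H *v x) \<ge> 0"
    and lam: "lam > 0"
    and start: "(z 0, v 0, s 0) \<in> Nbhd H h lam (1/4)"
    and pred: "\<forall>k. newton_sol H lam (z k) (v k) (s k) 0 (dmu (v k) (s k))
                     (dzp k) (dvp k) (dsp k)"
    and corr: "\<forall>k. let a = step_alpha (dmu (v k) (s k)) (dvp k) (dsp k);
                       zh = z k + a *\<^sub>R dzp k; vh = v k + a *\<^sub>R dvp k; sh = s k + a *\<^sub>R dsp k
                   in newton_sol H lam zh vh sh 1 (dmu vh sh) (dzc k) (dvc k) (dsc k)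
                      \<and> z (Suc k) = zh + dzc k \<and> v (Suc k) = vh + dvc k
                      \<and> s (Suc k) = sh + dsc k"
  shows "\<forall>k. let mu = dmu (v k) (s k); a = step_alpha mu (dvp k) (dsp k);
               vh = v k + a *\<^sub>R dvp k; sh = s k + a *\<^sub>R dsp k
           in dmu (dvp k) (dsp k) \<le> 1/4 * mu
              \<and> dmu vh sh \<le> (1 - a/2)^2 * mu
              \<and> dmu (dvc k) (dsc k) \<le> (1 - a/2)^2 * (1 / (16 * real CARD('n))) * mu"
proof -
  define \<alpha> where "\<alpha> k = step_alpha (dmu (v k) (s k)) (dvp k) (dsp k)" for k
  have corr_newton: "newton_sol H lam (z k + \<alpha> k *\<^sub>R dzp k) (v k + \<alpha> k *\<^sub>R dvp k) (s k + \<alpha> k *\<^sub>R dsp k)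
      1 (dmu (v k + \<alpha> k *\<^sub>R dvp k) (s k + \<alpha> k *\<^sub>R dsp k)) (dzc k) (dvc k) (dsc k)" for k
    using spec[OF corr, of k] by (simp add: Let_def \<alpha>_def)
  note step = predictor_corrector_step[OF psdH less_imp_le[OF lam] _ spec[OF pred] corr_newton[unfolded \<alpha>_def]]
  have invariant: "central_nbhd (1/4) (v k) (s k)" for k
  proof (induction k)
    case 0
    show ?case
      using start by (simp add: Nbhd_def Fplus_def central_nbhd_def centred_def dmu_eq_avg)
  next
    case (Suc k)
    with step(4) spec[OF corr, of k] show ?case
      by (simp add: Let_def)
  qed
  show ?thesis
    using step(1-3)[OF invariant] by (simp add: Let_def)
qed

end
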